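(* Let $\beta \ge 1$ and $\epsilon \in (0,1)$, and let $f:[-1,1]\to\mathbb{R}$ be the Fermi–Dirac distribution $$f(x) = \frac{1}{e^{\beta x}+1}.$$ Then there is a polynomial $p_d$ of degree $d = O\!\left(\beta \log\frac{\beta}{\epsilon}\right)$ (with an absolute implied constant) such that $\|f - p_d\|_{[-1,1]} \le \epsilon$ and $\|p_d\|_{[-1,1]} \le 1+\epsilon$.
   Context: For a function $g$ on $[-1,1]$, $\|g\|_{[-1,1]} = \sup_{x\in[-1,1]} |g(x)|$ denotes the uniform norm. *)

theory Defs
  imports "HOL-Analysis.Analysis" "HOL-Computational_Algebra.Polynomial"
begin

definition fermi_dirac :: "real \<Rightarrow> real \<Rightarrow> real" where
  "fermi_dirac \<beta> x = 1 / (exp (\<beta> * x) + 1)"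

end

theory Submission
  imports Defs "HOL-Complex_Analysis.Complex_Analysis"
begin

(* Pulled back along the Joukowski map w \<mapsto> (w + 1/w)/2, the Fermi-Dirac function becomes
   g(w) = 1/(exp(\<beta>(w + 1/w)/2) + 1), with g(e^(it)) = f(cos t). On the annulus
   1/r < |w| < r, r = 1 + 1/\<beta>, one has |Im(\<beta>(w + 1/w)/2)| \<le> 1 < pi/2, so Re exp > 0 there and
   g is holomorphic with |g| \<le> 1. Cauchy's formula on the closed annulus of radius
   \<rho> = 1 + 1/(2\<beta>) bounds the error of the N-term Laurent truncation of g on the unit circle
   by (\<rho> + 1)/(\<rho>^N (\<rho> - 1)) \<le> 5\<beta> exp(-N/(4\<beta>)). Averaging this truncation at e^(it) and
   e^(-it) gives a real combination of Chebyshev polynomials T_k(cos t) = cos(kt) of degree N,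
   so N = 4\<beta> ln(5\<beta>/\<epsilon>) suffices; |p| \<le> 1 + \<epsilon> follows from 0 < f < 1. *)

section \<open>Cauchy's integral formula on an annulus\<close>

lemma homotopic_loops_concentric_circlepaths:
  assumes "0 \<le> r" "r \<le> R" and annulus: "\<And>w. r \<le> norm w \<Longrightarrow> norm w \<le> R \<Longrightarrow> w \<in> A"
  shows "homotopic_loops A (circlepath 0 R) (circlepath 0 r)"
proof (rule homotopic_loops_linear)
  fix t :: real
  show "closed_segment (circlepath 0 R t) (circlepath 0 r t) \<subseteq> A"
  proof
    fix y assume "y \<in> closed_segment (circlepath 0 R t) (circlepath 0 r t)"
    then obtain u where u: "0 \<le> u" "u \<le> 1"
      and y: "y = (1 - u) *\<^sub>R circlepath 0 R t + u *\<^sub>R circlepath 0 r t"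
      by (auto simp: closed_segment_def)
    define s where "s = (1 - u) * R + u * r"
    have "y = of_real s * exp (2 * of_real pi * \<i> * of_real t)"
      by (simp add: y s_def circlepath scaleR_conv_of_real algebra_simps)
    moreover have "r \<le> s" "s \<le> R"
      using u assms mult_left_mono[of r R u] mult_left_mono[of r R "1 - u"]
      by (auto simp: s_def algebra_simps)
    ultimately have "norm y = s" using \<open>0 \<le> r\<close> by (simp add: norm_mult norm_exp)
    with \<open>r \<le> s\<close> \<open>s \<le> R\<close> show "y \<in> A" by (intro annulus) auto
  qed
qed auto

lemma Cauchy_integral_formula_annulus:
  fixes g :: "complex \<Rightarrow> complex"
  assumes hol: "g holomorphic_on A" and "open A"
    and annulus: "\<And>w. r \<le> norm w \<Longrightarrow> norm w \<le> R \<Longrightarrow> w \<in> A"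
    and "0 < r" "r < norm z" "norm z < R"
  shows "contour_integral (circlepath 0 R) (\<lambda>w. g w / (w - z))
           - contour_integral (circlepath 0 r) (\<lambda>w. g w / (w - z)) = 2 * of_real pi * \<i> * g z"
proof -
  define d where "d = (\<lambda>w. if w = z then deriv g z else (g w - g z) / (w - z))"
  have "d holomorphic_on A"
    using pole_lemma_open[OF hol \<open>open A\<close>] by (simp add: d_def)
  moreover have "homotopic_loops A (circlepath 0 R) (circlepath 0 r)"
    using assms by (intro homotopic_loops_concentric_circlepaths) auto
  ultimately have d_eq: "contour_integral (circlepath 0 R) d = contour_integral (circlepath 0 r) d"
    using Cauchy_theorem_homotopic_loops \<open>open A\<close> valid_path_circlepath by blast
  have "(\<lambda>w. g w / (w - z)) holomorphic_on A - {z}"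
    by (intro holomorphic_intros holomorphic_on_subset[OF hol]) auto
  then have int: "(\<lambda>w. g w / (w - z)) contour_integrable_on circlepath 0 s"
    if "s = r \<or> s = R" for s
    by (rule contour_integrable_holomorphic_simple) (use that assms in \<open>auto intro: open_delete\<close>)
  have const_R: "((\<lambda>w. g z / (w - z)) has_contour_integral (2 * of_real pi * \<i> * g z)) (circlepath 0 R)"
    using Cauchy_integral_circlepath[of 0 R "\<lambda>_. g z" z] assms by auto
  have const_r: "((\<lambda>w. g z / (w - z)) has_contour_integral 0) (circlepath 0 r)"
    by (rule Cauchy_theorem_disc_simple[of _ 0 "norm z"]) (use assms in \<open>auto intro!: holomorphic_intros\<close>)
  have "contour_integral (circlepath 0 R) d
          = contour_integral (circlepath 0 R) (\<lambda>w. g w / (w - z)) - 2 * of_real pi * \<i> * g z"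
    by (rule contour_integral_unique, rule has_contour_integral_eq
        [OF has_contour_integral_diff[OF has_contour_integral_integral[OF int] const_R]])
       (use assms in \<open>auto simp: d_def diff_divide_distrib\<close>)
  moreover have "contour_integral (circlepath 0 r) d = contour_integral (circlepath 0 r) (\<lambda>w. g w / (w - z)) - 0"
    by (rule contour_integral_unique, rule has_contour_integral_eq
        [OF has_contour_integral_diff[OF has_contour_integral_integral[OF int] const_r]])
       (use assms in \<open>auto simp: d_def diff_divide_distrib\<close>)
  ultimately show ?thesis using d_eq by simp
qed

section \<open>Truncated Laurent expansions\<close>

lemma cauchy_kernel_outer_expansion:
  fixes w z :: complex
  assumes "w \<noteq> 0" "w \<noteq> z"
  shows "1 / (w - z) = (\<Sum>k<N. z ^ k / w ^ Suc k) + (z / w) ^ N / (w - z)"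
proof (induction N)
  case (Suc N)
  have "(z / w) ^ N / (w - z) = z ^ N / w ^ Suc N + (z / w) ^ Suc N / (w - z)"
    using assms by (simp add: field_simps)
  with Suc show ?case by simp
qed simp

lemma cauchy_kernel_inner_expansion:
  fixes w z :: complex
  assumes "z \<noteq> 0" "w \<noteq> z"
  shows "1 / (w - z) = (w / z) ^ N / (w - z) - (\<Sum>k<N. w ^ k / z ^ Suc k)"
proof -
  have "1 / (z - w) = (\<Sum>k<N. w ^ k / z ^ Suc k) + (w / z) ^ N / (z - w)"
    using assms by (intro cauchy_kernel_outer_expansion) auto
  moreover have "1 / (w - z) = - (1 / (z - w))" "(w / z) ^ N / (w - z) = - ((w / z) ^ N / (z - w))"
    by (metis minus_diff_eq divide_minus_right)+
  ultimately show ?thesis by simp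
qed

lemma contour_integral_cauchy_kernel_outer:
  assumes hol: "g holomorphic_on S" and "open S" "0 \<notin> S" "z \<notin> S"
    and \<gamma>: "valid_path \<gamma>" "path_image \<gamma> \<subseteq> S"
  shows "contour_integral \<gamma> (\<lambda>w. g w / (w - z))
           = (\<Sum>k<N. z ^ k * contour_integral \<gamma> (\<lambda>w. g w / w ^ Suc k))
             + contour_integral \<gamma> (\<lambda>w. g w * (z / w) ^ N / (w - z))"
proof -
  have nz: "w \<noteq> 0" "w \<noteq> z" if "w \<in> S" for w
    using that assms by auto
  have int: "f contour_integrable_on \<gamma>" if "f holomorphic_on S" for f
    using contour_integrable_holomorphic_simple[OF that \<open>open S\<close> \<gamma>] .
  have "((\<lambda>w. (\<Sum>k<N. z ^ k * (g w / w ^ Suc k)) + g w * (z / w) ^ N / (w - z)) has_contour_integral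
          (\<Sum>k<N. z ^ k * contour_integral \<gamma> (\<lambda>w. g w / w ^ Suc k))
          + contour_integral \<gamma> (\<lambda>w. g w * (z / w) ^ N / (w - z))) \<gamma>"
    by (intro has_contour_integral_add has_contour_integral_sum has_contour_integral_lmul
        has_contour_integral_integral int holomorphic_intros hol) (auto dest: nz)
  then have "((\<lambda>w. g w / (w - z)) has_contour_integral
          (\<Sum>k<N. z ^ k * contour_integral \<gamma> (\<lambda>w. g w / w ^ Suc k))
          + contour_integral \<gamma> (\<lambda>w. g w * (z / w) ^ N / (w - z))) \<gamma>"
  proof (rule has_contour_integral_eq)
    fix w assume "w \<in> path_image \<gamma>"
    then have "1 / (w - z) = (\<Sum>k<N. z ^ k / w ^ Suc k) + (z / w) ^ N / (w - z)"
      using nz \<gamma> by (intro cauchy_kernel_outer_expansion) auto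
    then have "g w / (w - z) = g w * ((\<Sum>k<N. z ^ k / w ^ Suc k) + (z / w) ^ N / (w - z))"
      by (metis times_divide_eq_right mult.right_neutral)
    then show "(\<Sum>k<N. z ^ k * (g w / w ^ Suc k)) + g w * (z / w) ^ N / (w - z) = g w / (w - z)"
      by (simp add: distrib_left sum_distrib_left algebra_simps)
  qed
  then show ?thesis by (rule contour_integral_unique)
qed

lemma contour_integral_cauchy_kernel_inner:
  assumes hol: "g holomorphic_on S" and "open S" "z \<noteq> 0" "z \<notin> S"
    and \<gamma>: "valid_path \<gamma>" "path_image \<gamma> \<subseteq> S"
  shows "contour_integral \<gamma> (\<lambda>w. g w / (w - z))
           = contour_integral \<gamma> (\<lambda>w. g w * (w / z) ^ N / (w - z))
             - (\<Sum>k<N. contour_integral \<gamma> (\<lambda>w. g w * w ^ k) / z ^ Suc k)"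
proof -
  have nz: "w \<noteq> z" if "w \<in> S" for w
    using that assms by auto
  have int: "f contour_integrable_on \<gamma>" if "f holomorphic_on S" for f
    using contour_integrable_holomorphic_simple[OF that \<open>open S\<close> \<gamma>] .
  have "((\<lambda>w. g w * (w / z) ^ N / (w - z) - (\<Sum>k<N. g w * w ^ k / z ^ Suc k)) has_contour_integral
          contour_integral \<gamma> (\<lambda>w. g w * (w / z) ^ N / (w - z))
          - (\<Sum>k<N. contour_integral \<gamma> (\<lambda>w. g w * w ^ k) / z ^ Suc k)) \<gamma>"
    by (intro has_contour_integral_diff has_contour_integral_sum has_contour_integral_div
        has_contour_integral_integral int holomorphic_intros hol) (auto dest: nz)
  then have "((\<lambda>w. g w / (w - z)) has_contour_integral
          contour_integral \<gamma> (\<lambda>w. g w * (w / z) ^ N / (w - z))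
          - (\<Sum>k<N. contour_integral \<gamma> (\<lambda>w. g w * w ^ k) / z ^ Suc k)) \<gamma>"
  proof (rule has_contour_integral_eq)
    fix w assume "w \<in> path_image \<gamma>"
    then have "1 / (w - z) = (w / z) ^ N / (w - z) - (\<Sum>k<N. w ^ k / z ^ Suc k)"
      using nz \<gamma> \<open>z \<noteq> 0\<close> by (intro cauchy_kernel_inner_expansion) auto
    then have "g w / (w - z) = g w * ((w / z) ^ N / (w - z) - (\<Sum>k<N. w ^ k / z ^ Suc k))"
      by (metis times_divide_eq_right mult.right_neutral)
    then show "g w * (w / z) ^ N / (w - z) - (\<Sum>k<N. g w * w ^ k / z ^ Suc k) = g w / (w - z)"
      by (simp add: right_diff_distrib sum_distrib_left)
  qed
  then show ?thesis by (rule contour_integral_unique)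
qed

definition laurent_coeff_pos :: "(complex \<Rightarrow> complex) \<Rightarrow> real \<Rightarrow> nat \<Rightarrow> complex" where
  "laurent_coeff_pos g r k = contour_integral (circlepath 0 r) (\<lambda>w. g w / w ^ Suc k) / (2 * of_real pi * \<i>)"

text \<open>The coefficient of \<open>z ^ -(k + 1)\<close>.\<close>
definition laurent_coeff_neg :: "(complex \<Rightarrow> complex) \<Rightarrow> real \<Rightarrow> nat \<Rightarrow> complex" where
  "laurent_coeff_neg g r k = contour_integral (circlepath 0 r) (\<lambda>w. g w * w ^ k) / (2 * of_real pi * \<i>)"

definition laurent_poly :: "(nat \<Rightarrow> complex) \<Rightarrow> (nat \<Rightarrow> complex) \<Rightarrow> nat \<Rightarrow> complex \<Rightarrow> complex" where
  "laurent_poly a b N z = (\<Sum>k<N. a k * z ^ k + b k / z ^ Suc k)"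

lemma laurent_poly_remainder:
  fixes g :: "complex \<Rightarrow> complex"
  assumes hol: "g holomorphic_on A" and "open A"
    and annulus: "\<And>w. r \<le> norm w \<Longrightarrow> norm w \<le> R \<Longrightarrow> w \<in> A"
    and "0 < r" "r < norm z" "norm z < R"
  shows "g z - laurent_poly (laurent_coeff_pos g R) (laurent_coeff_neg g r) N z
           = (contour_integral (circlepath 0 R) (\<lambda>w. g w * (z / w) ^ N / (w - z))
              - contour_integral (circlepath 0 r) (\<lambda>w. g w * (w / z) ^ N / (w - z))) / (2 * of_real pi * \<i>)"
proof -
  define S where "S = A - {0, z}"
  have S: "g holomorphic_on S" "open S" "0 \<notin> S" "z \<notin> S" "z \<noteq> 0"
    using assms by (auto simp: S_def intro: holomorphic_on_subset)
  have "path_image (circlepath 0 R) \<subseteq> S" "path_image (circlepath 0 r) \<subseteq> S"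
    using assms by (auto simp: S_def)
  note outer = contour_integral_cauchy_kernel_outer[OF S(1-4) valid_path_circlepath this(1), of N]
   and inner = contour_integral_cauchy_kernel_inner[OF S(1,2,5,4) valid_path_circlepath this(2), of N]
  define c :: complex where "c = 2 * of_real pi * \<i>"
  define P where "P = (\<Sum>k<N. z ^ k * contour_integral (circlepath 0 R) (\<lambda>w. g w / w ^ Suc k))"
  define Q where "Q = (\<Sum>k<N. contour_integral (circlepath 0 r) (\<lambda>w. g w * w ^ k) / z ^ Suc k)"
  define R1 where "R1 = contour_integral (circlepath 0 R) (\<lambda>w. g w * (z / w) ^ N / (w - z))"
  define R2 where "R2 = contour_integral (circlepath 0 r) (\<lambda>w. g w * (w / z) ^ N / (w - z))"
  have "c * g z = contour_integral (circlepath 0 R) (\<lambda>w. g w / (w - z))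
          - contour_integral (circlepath 0 r) (\<lambda>w. g w / (w - z))"
    unfolding c_def using Cauchy_integral_formula_annulus[OF hol \<open>open A\<close> annulus] assms by simp
  also have "\<dots> = P + Q + R1 - R2"
    unfolding outer inner P_def Q_def R1_def R2_def by simp
  finally have "c * g z = P + Q + R1 - R2" .
  moreover have "laurent_poly (laurent_coeff_pos g R) (laurent_coeff_neg g r) N z = (P + Q) / c"
    unfolding laurent_poly_def laurent_coeff_pos_def laurent_coeff_neg_def P_def Q_def c_def
    by (simp add: sum_divide_distrib sum.distrib add_divide_distrib mult_ac)
  moreover have "c \<noteq> 0" by (simp add: c_def)
  ultimately have "g z - laurent_poly (laurent_coeff_pos g R) (laurent_coeff_neg g r) N z = (R1 - R2) / c"
    by (simp add: field_simps)
  then show ?thesis by (simp add: c_def R1_def R2_def)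
qed

lemma norm_outer_remainder_le:
  fixes c z w :: complex
  assumes "norm c \<le> M" "norm z = 1" "norm w = \<rho>" "1 < \<rho>"
  shows "norm (c * (z / w) ^ N / (w - z)) \<le> M / (\<rho> ^ N * (\<rho> - 1))"
proof -
  have "\<rho> - 1 \<le> norm (w - z)"
    using norm_triangle_ineq2[of w z] assms by simp
  moreover have "norm (c * (z / w) ^ N / (w - z)) = norm c * (1 / \<rho>) ^ N / norm (w - z)"
    using assms by (simp add: norm_mult norm_divide norm_power)
  ultimately have "norm (c * (z / w) ^ N / (w - z)) \<le> M * (1 / \<rho>) ^ N / (\<rho> - 1)"
    using assms by (auto intro!: divide_mono mult_right_mono)
  then show ?thesis by (simp add: power_one_over)
qed

lemma norm_inner_remainder_le:
  fixes c z w :: complex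
  assumes "norm c \<le> M" "norm z = 1" "norm w = 1 / \<rho>" "1 < \<rho>"
  shows "norm (c * (w / z) ^ N / (w - z)) \<le> M * \<rho> / (\<rho> ^ N * (\<rho> - 1))"
proof -
  have "1 - 1 / \<rho> \<le> norm (w - z)" "0 < 1 - 1 / \<rho>"
    using norm_triangle_ineq2[of z w] assms by (auto simp: norm_minus_commute)
  moreover have "norm (c * (w / z) ^ N / (w - z)) = norm c * (1 / \<rho>) ^ N / norm (w - z)"
    using assms by (simp add: norm_mult norm_divide norm_power)
  ultimately have "norm (c * (w / z) ^ N / (w - z)) \<le> M * (1 / \<rho>) ^ N / (1 - 1 / \<rho>)"
    using assms by (auto intro!: divide_mono mult_right_mono)
  also have "\<dots> = M * \<rho> / (\<rho> ^ N * (\<rho> - 1))"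
    using assms by (simp add: field_simps)
  finally show ?thesis .
qed

lemma norm_contour_integral_circlepath_le:
  assumes "0 < r" "0 \<le> B" "\<And>w. norm (w - z) = r \<Longrightarrow> norm (f w) \<le> B"
  shows "norm (contour_integral (circlepath z r) f) \<le> B * (2 * pi * r)"
proof (cases "f contour_integrable_on circlepath z r")
  case True
  then show ?thesis
    using assms by (intro has_contour_integral_bound_circlepath[OF has_contour_integral_integral])
next
  case False
  then show ?thesis
    using assms by (simp add: not_integrable_contour_integral)
qed

lemma norm_laurent_poly_remainder_le:
  fixes g :: "complex \<Rightarrow> complex"
  assumes hol: "g holomorphic_on A" and "open A"
    and annulus: "\<And>w. 1 / \<rho> \<le> norm w \<Longrightarrow> norm w \<le> \<rho> \<Longrightarrow> w \<in> A"
    and bounded: "\<And>w. 1 / \<rho> \<le> norm w \<Longrightarrow> norm w \<le> \<rho> \<Longrightarrow> norm (g w) \<le> M"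
    and "1 < \<rho>" "norm z = 1"
  shows "norm (g z - laurent_poly (laurent_coeff_pos g \<rho>) (laurent_coeff_neg g (1 / \<rho>)) N z)
           \<le> M * (\<rho> + 1) / (\<rho> ^ N * (\<rho> - 1))"
proof -
  have \<rho>: "0 < 1 / \<rho>" "1 / \<rho> < 1"
    using \<open>1 < \<rho>\<close> by (auto simp: field_simps)
  then have "1 / \<rho> \<le> \<rho>"
    using \<open>1 < \<rho>\<close> by linarith
  have "0 \<le> M"
    using bounded[of 1] \<rho> by (auto intro: order_trans[OF norm_ge_zero])
  have "norm (contour_integral (circlepath 0 \<rho>) (\<lambda>w. g w * (z / w) ^ N / (w - z)))
          \<le> M / (\<rho> ^ N * (\<rho> - 1)) * (2 * pi * \<rho>)"
    using assms \<open>0 \<le> M\<close> \<open>1 / \<rho> \<le> \<rho>\<close>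
    by (intro norm_contour_integral_circlepath_le norm_outer_remainder_le bounded) auto
  moreover have "norm (contour_integral (circlepath 0 (1 / \<rho>)) (\<lambda>w. g w * (w / z) ^ N / (w - z)))
          \<le> M * \<rho> / (\<rho> ^ N * (\<rho> - 1)) * (2 * pi * (1 / \<rho>))"
    using assms \<open>0 \<le> M\<close> \<open>1 / \<rho> \<le> \<rho>\<close>
    by (intro norm_contour_integral_circlepath_le norm_inner_remainder_le bounded) auto
  ultimately have "norm (contour_integral (circlepath 0 \<rho>) (\<lambda>w. g w * (z / w) ^ N / (w - z))
                     - contour_integral (circlepath 0 (1 / \<rho>)) (\<lambda>w. g w * (w / z) ^ N / (w - z)))
                   \<le> M * (\<rho> + 1) / (\<rho> ^ N * (\<rho> - 1)) * (2 * pi)"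
    using \<open>1 < \<rho>\<close> by (intro order.trans[OF norm_triangle_ineq4]) (simp add: field_simps)
  moreover have "g z - laurent_poly (laurent_coeff_pos g \<rho>) (laurent_coeff_neg g (1 / \<rho>)) N z
      = (contour_integral (circlepath 0 \<rho>) (\<lambda>w. g w * (z / w) ^ N / (w - z))
         - contour_integral (circlepath 0 (1 / \<rho>)) (\<lambda>w. g w * (w / z) ^ N / (w - z)))
        / (2 * of_real pi * \<i>)"
    by (rule laurent_poly_remainder[OF hol \<open>open A\<close>]) (use annulus \<rho> assms in auto)
  moreover have "norm (2 * of_real pi * \<i> :: complex) = 2 * pi"
    by (simp add: norm_mult)
  ultimately show ?thesis
    by (simp add: norm_divide divide_le_eq)
qed

section \<open>Chebyshev polynomials\<close>

fun chebyshev_poly :: "nat \<Rightarrow> real poly" where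
  "chebyshev_poly 0 = 1"
| "chebyshev_poly (Suc 0) = [:0, 1:]"
| "chebyshev_poly (Suc (Suc n)) = [:0, 2:] * chebyshev_poly (Suc n) - chebyshev_poly n"

lemma poly_chebyshev_poly_cos: "poly (chebyshev_poly n) (cos t) = cos (real n * t)"
proof (induction n rule: chebyshev_poly.induct)
  case (3 n)
  define u where "u = real (Suc n) * t"
  have "real (Suc (Suc n)) * t = u + t" "real n * t = u - t"
    by (simp_all add: u_def algebra_simps)
  moreover have "cos (u + t) = 2 * cos t * cos u - cos (u - t)"
    by (simp add: cos_add cos_diff)
  ultimately show ?case using 3 by (simp add: u_def)
qed auto

lemma degree_chebyshev_poly_le: "degree (chebyshev_poly n) \<le> n"
proof (induction n rule: chebyshev_poly.induct)
  case (3 n)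
  have "degree ([:0, 2:] * chebyshev_poly (Suc n)) \<le> Suc (Suc n)"
    using degree_mult_le[of "[:0, 2:]" "chebyshev_poly (Suc n)"] 3 by simp
  with 3 show ?case by (auto intro: order.trans[OF degree_diff_le])
qed auto

definition chebyshev_sum :: "(nat \<Rightarrow> complex) \<Rightarrow> (nat \<Rightarrow> complex) \<Rightarrow> nat \<Rightarrow> real poly" where
  "chebyshev_sum a b N =
     (\<Sum>k<N. smult (Re (a k)) (chebyshev_poly k) + smult (Re (b k)) (chebyshev_poly (Suc k)))"

lemma degree_chebyshev_sum_le: "degree (chebyshev_sum a b N) \<le> N"
  unfolding chebyshev_sum_def
proof (intro degree_sum_le)
  fix k assume "k \<in> {..<N}"
  then have "degree (smult (Re (a k)) (chebyshev_poly k)) \<le> N"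
            "degree (smult (Re (b k)) (chebyshev_poly (Suc k))) \<le> N"
    using degree_chebyshev_poly_le[of k] degree_chebyshev_poly_le[of "Suc k"] degree_smult_le
    by (auto intro: order.trans)
  then show "degree (smult (Re (a k)) (chebyshev_poly k) + smult (Re (b k)) (chebyshev_poly (Suc k))) \<le> N"
    by (auto intro: order.trans[OF degree_add_le])
qed auto

lemma cis_power_add_cis_minus_power: "cis t ^ n + cis (- t) ^ n = of_real (2 * cos (real n * t))"
  unfolding Complex.DeMoivre by (simp add: complex_eq_iff)

lemma Re_laurent_poly_cis:
  "Re (laurent_poly a b N (cis t) + laurent_poly a b N (cis (- t)))
     = 2 * poly (chebyshev_sum a b N) (cos t)"
proof -
  have inv: "c / cis s ^ m = c * cis (- s) ^ m" for c s m
    by (simp add: divide_inverse power_inverse[symmetric])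
  have "laurent_poly a b N (cis t) + laurent_poly a b N (cis (- t))
          = (\<Sum>k<N. a k * (cis t ^ k + cis (- t) ^ k) + b k * (cis t ^ Suc k + cis (- t) ^ Suc k))"
    unfolding laurent_poly_def sum.distrib[symmetric]
    by (intro sum.cong) (simp_all only: inv distrib_left add_ac minus_minus)
  also have "\<dots> = (\<Sum>k<N. a k * of_real (2 * cos (real k * t)) + b k * of_real (2 * cos (real (Suc k) * t)))"
    by (simp only: cis_power_add_cis_minus_power)
  finally show ?thesis
    by (simp add: chebyshev_sum_def Re_sum poly_sum poly_chebyshev_poly_cos sum_distrib_left algebra_simps)
qed

lemma chebyshev_sum_approx:
  fixes g :: "complex \<Rightarrow> complex" and h :: "real \<Rightarrow> real"
  assumes restrict: "\<And>t. g (cis t) = of_real (h (cos t))"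
    and approx: "\<And>z. norm z = 1 \<Longrightarrow> norm (g z - laurent_poly a b N z) \<le> B"
    and x: "x \<in> {-1..1}"
  shows "\<bar>h x - poly (chebyshev_sum a b N) x\<bar> \<le> B"
proof -
  define t where "t = arccos x"
  have "cos t = x" using x by (simp add: t_def)
  define S where "S = laurent_poly a b N"
  have "2 * (h x - poly (chebyshev_sum a b N) x) = Re (g (cis t) - S (cis t)) + Re (g (cis (- t)) - S (cis (- t)))"
    using Re_laurent_poly_cis[of a b N t] restrict[of t] restrict[of "- t"] \<open>cos t = x\<close>
    by (simp add: S_def)
  also have "\<bar>\<dots>\<bar> \<le> norm (g (cis t) - S (cis t)) + norm (g (cis (- t)) - S (cis (- t)))"
    using abs_Re_le_cmod[of "g (cis t) - S (cis t)"] abs_Re_le_cmod[of "g (cis (- t)) - S (cis (- t))"]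
    by linarith
  also have "\<dots> \<le> 2 * B"
    using approx[of "cis t"] approx[of "cis (- t)"] by (simp add: S_def)
  finally show ?thesis by simp
qed

section \<open>The Fermi-Dirac function on a Joukowski annulus\<close>

definition fermi_dirac_joukowski :: "real \<Rightarrow> complex \<Rightarrow> complex" where
  "fermi_dirac_joukowski \<beta> w = 1 / (exp (of_real \<beta> * (w + 1 / w) / 2) + 1)"

lemma fermi_dirac_joukowski_cis: "fermi_dirac_joukowski \<beta> (cis t) = of_real (fermi_dirac \<beta> (cos t))"
proof -
  have "cis t + 1 / cis t = of_real (2 * cos t)"
    by (simp add: divide_inverse complex_eq_iff)
  then have arg: "of_real \<beta> * (cis t + 1 / cis t) / 2 = of_real (\<beta> * cos t)"
    by simp
  show ?thesis
    unfolding fermi_dirac_joukowski_def fermi_dirac_def arg exp_of_real by simp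
qed

lemma abs_Im_add_inverse_le:
  fixes w :: complex
  assumes "1 / r < norm w" "norm w < r"
  shows "\<bar>Im (w + 1 / w)\<bar> \<le> r - 1 / r"
proof -
  define s where "s = norm w"
  have "0 < r"
    using assms(2) norm_ge_zero[of w] by linarith
  then have "0 < s"
    using assms(1) unfolding s_def by (meson divide_pos_pos zero_less_one less_trans)
  have "(Re w)\<^sup>2 + (Im w)\<^sup>2 = s\<^sup>2"
    by (simp add: s_def cmod_power2)
  then have "Im (w + 1 / w) = Im w * (1 - 1 / s ^ 2)"
    using \<open>0 < s\<close> by (simp add: Im_divide field_simps)
  moreover have "\<bar>Im w\<bar> \<le> s"
    using abs_Im_le_cmod[of w] by (simp add: s_def)
  ultimately have "\<bar>Im (w + 1 / w)\<bar> \<le> s * \<bar>1 - 1 / s ^ 2\<bar>"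
    by (simp add: abs_mult mult_right_mono)
  also have "\<dots> = \<bar>s - 1 / s\<bar>"
    using \<open>0 < s\<close> by (simp add: abs_mult[symmetric] field_simps power2_eq_square)
  also have "\<dots> \<le> r - 1 / r"
  proof -
    have "1 / s < r" "1 / r < 1 / s"
      using assms \<open>0 < r\<close> \<open>0 < s\<close> by (simp_all add: s_def field_simps)
    then show ?thesis using assms by (simp add: s_def abs_le_iff)
  qed
  finally show ?thesis .
qed

lemma norm_exp_add_one_ge_1:
  fixes u :: complex
  assumes "\<bar>Im u\<bar> \<le> pi / 2"
  shows "1 \<le> norm (exp u + 1)"
proof -
  have "0 \<le> cos (Im u)"
    using assms by (intro cos_ge_zero) auto
  then have "1 \<le> Re (exp u + 1)"
    by (simp add: Re_exp)
  also have "\<dots> \<le> norm (exp u + 1)"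
    by (rule complex_Re_le_cmod)
  finally show ?thesis .
qed

lemma norm_exp_joukowski_add_one_ge_1:
  fixes w :: complex
  assumes "1 \<le> \<beta>" "1 / (1 + 1 / \<beta>) < norm w" "norm w < 1 + 1 / \<beta>"
  shows "1 \<le> norm (exp (of_real \<beta> * (w + 1 / w) / 2) + 1)"
proof (rule norm_exp_add_one_ge_1)
  define v where "v = w + 1 / w"
  have "(1 + 1 / \<beta>) - 1 / (1 + 1 / \<beta>) = 1 / \<beta> + 1 / (\<beta> + 1)"
    using assms(1) by (simp add: field_simps)
  moreover have "1 / (\<beta> + 1) \<le> 1 / \<beta>"
    using assms(1) by (intro divide_left_mono) auto
  ultimately have "\<bar>Im v\<bar> \<le> 2 / \<beta>"
    using abs_Im_add_inverse_le[OF assms(2,3)] by (simp add: v_def)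
  then have "\<bar>Im (of_real \<beta> * v / 2)\<bar> \<le> 1"
    using assms(1) by (simp add: abs_mult field_simps)
  then show "\<bar>Im (of_real \<beta> * (w + 1 / w) / 2)\<bar> \<le> pi / 2"
    using pi_gt3 by (simp add: v_def)
qed

lemma fermi_dirac_joukowski_holomorphic:
  assumes "1 \<le> \<beta>"
  shows "fermi_dirac_joukowski \<beta> holomorphic_on ball 0 (1 + 1 / \<beta>) - cball 0 (1 / (1 + 1 / \<beta>))"
  unfolding fermi_dirac_joukowski_def
proof (intro holomorphic_intros)
  fix w :: complex assume w: "w \<in> ball 0 (1 + 1 / \<beta>) - cball 0 (1 / (1 + 1 / \<beta>))"
  then have "1 / (1 + 1 / \<beta>) < norm w" "norm w < 1 + 1 / \<beta>"
    by auto
  then show "exp (of_real \<beta> * (w + 1 / w) / 2) + 1 \<noteq> 0"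
    using norm_exp_joukowski_add_one_ge_1[OF assms] by (metis norm_zero not_one_le_zero)
  show "w \<noteq> 0"
    using \<open>1 / (1 + 1 / \<beta>) < norm w\<close> assms by (auto simp: field_simps)
qed auto

lemma norm_fermi_dirac_joukowski_le_1:
  assumes "1 \<le> \<beta>" "1 / (1 + 1 / \<beta>) < norm w" "norm w < 1 + 1 / \<beta>"
  shows "norm (fermi_dirac_joukowski \<beta> w) \<le> 1"
  using norm_exp_joukowski_add_one_ge_1[OF assms]
  by (simp add: fermi_dirac_joukowski_def norm_divide divide_le_eq)

lemma fermi_dirac_pos: "0 < fermi_dirac \<beta> x"
  by (simp add: fermi_dirac_def add_pos_pos)

lemma fermi_dirac_less_1: "fermi_dirac \<beta> x < 1"
proof -
  have "0 < exp (\<beta> * x) + 1" "1 < exp (\<beta> * x) + 1"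
    by (simp_all add: add_pos_pos)
  then show ?thesis
    unfolding fermi_dirac_def by (metis divide_less_eq_1_pos)
qed

lemma ln_one_plus_ge_half:
  fixes x :: real
  assumes "0 \<le> x" "x \<le> 1 / 2"
  shows "x / 2 \<le> ln (1 + x)"
proof -
  have "x / 2 \<le> x - x ^ 2"
    using assms mult_left_mono[of x "1 / 2" x] by (simp add: power2_eq_square)
  also have "\<dots> \<le> ln (1 + x)"
    using assms by (intro ln_one_plus_pos_lower_bound) auto
  finally show ?thesis .
qed

lemma laurent_error_bound_le_exp:
  assumes "1 \<le> \<beta>"
  defines "\<rho> \<equiv> 1 + 1 / (2 * \<beta>)"
  shows "(\<rho> + 1) / (\<rho> ^ N * (\<rho> - 1)) \<le> 5 * \<beta> * exp (- real N / (4 * \<beta>))"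
proof -
  have "1 < \<rho>"
    using assms by (simp add: \<rho>_def)
  have "exp (real N / (4 * \<beta>)) \<le> \<rho> ^ N"
  proof -
    have "1 / (4 * \<beta>) \<le> ln \<rho>"
      using ln_one_plus_ge_half[of "1 / (2 * \<beta>)"] assms by (simp add: \<rho>_def)
    then have "real N / (4 * \<beta>) \<le> ln (\<rho> ^ N)"
      using mult_left_mono[of "1 / (4 * \<beta>)" "ln \<rho>" "real N"] \<open>1 < \<rho>\<close> by (simp add: ln_realpow)
    then show ?thesis
      using \<open>1 < \<rho>\<close> by (metis exp_le_cancel_iff exp_ln zero_less_power less_trans zero_less_one)
  qed
  moreover have "(\<rho> + 1) / (\<rho> ^ N * (\<rho> - 1)) = (4 * \<beta> + 1) / \<rho> ^ N"
    using assms by (simp add: \<rho>_def field_simps)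
  ultimately have "(\<rho> + 1) / (\<rho> ^ N * (\<rho> - 1)) \<le> 5 * \<beta> / exp (real N / (4 * \<beta>))"
    using assms by (intro ord_eq_le_trans[OF _ frac_le]) auto
  also have "\<dots> = 5 * \<beta> * exp (- real N / (4 * \<beta>))"
    by (simp add: exp_minus inverse_eq_divide)
  finally show ?thesis .
qed

lemma fermi_dirac_poly_approx:
  assumes "1 \<le> \<beta>"
  shows "\<exists>p. degree p \<le> N \<and>
           (\<forall>x \<in> {-1..1}. \<bar>fermi_dirac \<beta> x - poly p x\<bar> \<le> 5 * \<beta> * exp (- real N / (4 * \<beta>)))"
proof -
  define \<rho> where "\<rho> = 1 + 1 / (2 * \<beta>)"
  define r where "r = 1 + 1 / \<beta>"
  define g where "g = fermi_dirac_joukowski \<beta>"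
  define p where "p = chebyshev_sum (laurent_coeff_pos g \<rho>) (laurent_coeff_neg g (1 / \<rho>)) N"
  have "1 < \<rho>" "\<rho> < r"
    using assms by (auto simp: \<rho>_def r_def field_simps)
  then have "1 / r < 1 / \<rho>"
    by (intro divide_strict_left_mono) auto
  then have annulus: "1 / r < norm w" "norm w < r" if "1 / \<rho> \<le> norm w" "norm w \<le> \<rho>" for w :: complex
    using that \<open>\<rho> < r\<close> by auto
  have hol: "g holomorphic_on ball 0 r - cball 0 (1 / r)"
    unfolding g_def r_def using assms by (rule fermi_dirac_joukowski_holomorphic)
  have "open (ball 0 r - cball 0 (1 / r))"
    by auto
  moreover have "w \<in> ball 0 r - cball 0 (1 / r)" if "1 / \<rho> \<le> norm w" "norm w \<le> \<rho>" for w :: complex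
    using annulus[OF that] by auto
  moreover have "norm (g w) \<le> 1" if "1 / \<rho> \<le> norm w" "norm w \<le> \<rho>" for w :: complex
    using annulus[OF that] assms unfolding g_def r_def by (intro norm_fermi_dirac_joukowski_le_1)
  ultimately have remainder: "norm (g z - laurent_poly (laurent_coeff_pos g \<rho>) (laurent_coeff_neg g (1 / \<rho>)) N z)
          \<le> (\<rho> + 1) / (\<rho> ^ N * (\<rho> - 1))" if "norm z = 1" for z
    using norm_laurent_poly_remainder_le[OF hol, of _ 1, OF _ _ _ \<open>1 < \<rho>\<close> that] by simp
  have approx: "\<bar>fermi_dirac \<beta> x - poly p x\<bar> \<le> (\<rho> + 1) / (\<rho> ^ N * (\<rho> - 1))"
    if "x \<in> {-1..1}" for x
    unfolding p_def by (rule chebyshev_sum_approx[OF _ remainder that]) (simp_all add: g_def fermi_dirac_joukowski_cis)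
  have "\<bar>fermi_dirac \<beta> x - poly p x\<bar> \<le> 5 * \<beta> * exp (- real N / (4 * \<beta>))"
    if "x \<in> {-1..1}" for x
    using approx[OF that] laurent_error_bound_le_exp[OF assms, of N] unfolding \<rho>_def by linarith
  then show ?thesis
    using degree_chebyshev_sum_le unfolding p_def by blast
qed

lemma ln_five_mult_le:
  fixes y :: real
  assumes "2 \<le> y"
  shows "ln (5 * y) \<le> 4 * ln y"
proof -
  have "ln (5 :: real) \<le> ln (2 ^ 3)"
    by simp
  also have "\<dots> = 3 * ln 2"
    by (simp only: ln_realpow)
  also have "\<dots> \<le> 3 * ln y"
    using assms by simp
  finally show ?thesis
    using assms by (simp add: ln_mult)
qed

lemma fermi_dirac_poly_approx_small_eps:
  assumes "1 \<le> \<beta>" "0 < \<epsilon>" "\<epsilon> < 1 / 2"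
  shows "\<exists>p. real (degree p) \<le> 20 * \<beta> * ln (\<beta> / \<epsilon>) \<and>
           (\<forall>x \<in> {-1..1}. \<bar>fermi_dirac \<beta> x - poly p x\<bar> \<le> \<epsilon>)"
proof -
  define L where "L = ln (\<beta> / \<epsilon>)"
  define K where "K = 4 * \<beta> * ln (5 * \<beta> / \<epsilon>)"
  define N where "N = nat \<lceil>K\<rceil>"
  have "2 \<le> \<beta> / \<epsilon>"
    using assms by (simp add: field_simps)
  then have "ln 2 \<le> L"
    unfolding L_def by (subst ln_le_cancel_iff) auto
  have "ln (5 * \<beta> / \<epsilon>) \<le> 4 * L"
    using ln_five_mult_le[OF \<open>2 \<le> \<beta> / \<epsilon>\<close>] by (simp add: L_def)
  have "2 / 3 \<le> L"
    using \<open>ln 2 \<le> L\<close> ln2_ge_two_thirds by linarith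
  have "0 \<le> K"
    using assms \<open>2 \<le> \<beta> / \<epsilon>\<close> by (simp add: K_def)
  obtain p where "degree p \<le> N"
    and approx: "\<And>x. x \<in> {-1..1} \<Longrightarrow> \<bar>fermi_dirac \<beta> x - poly p x\<bar> \<le> 5 * \<beta> * exp (- real N / (4 * \<beta>))"
    using fermi_dirac_poly_approx[OF assms(1)] by blast
  have "real N \<le> K + 1"
    unfolding N_def using \<open>0 \<le> K\<close> by linarith
  also have "\<dots> \<le> 16 * \<beta> * L + 1"
    using \<open>ln (5 * \<beta> / \<epsilon>) \<le> 4 * L\<close> assms by (simp add: K_def)
  also have "\<dots> \<le> 20 * \<beta> * L"
    using \<open>2 / 3 \<le> L\<close> assms mult_mono[of 1 \<beta> "2 / 3" L] by linarith
  finally have "real (degree p) \<le> 20 * \<beta> * ln (\<beta> / \<epsilon>)"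
    using \<open>degree p \<le> N\<close> unfolding L_def by linarith
  moreover have "5 * \<beta> * exp (- real N / (4 * \<beta>)) \<le> \<epsilon>"
  proof -
    have "- real N / (4 * \<beta>) \<le> - ln (5 * \<beta> / \<epsilon>)"
      using real_nat_ceiling_ge[of K] assms by (simp add: N_def K_def field_simps)
    then have "exp (- real N / (4 * \<beta>)) \<le> exp (- ln (5 * \<beta> / \<epsilon>))"
      by simp
    also have "\<dots> = \<epsilon> / (5 * \<beta>)"
      using assms by (simp add: exp_minus)
    finally show ?thesis
      using assms by (simp add: field_simps)
  qed
  ultimately show ?thesis
    using approx by fastforce
qed

theorem theorem2:
  shows "\<exists>C > 0. \<forall>(\<beta>::real) (\<epsilon>::real). \<beta> \<ge> 1 \<longrightarrow> 0 < \<epsilon> \<longrightarrow> \<epsilon> < 1 \<longrightarrow>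
    (\<exists>p :: real poly. real (degree p) \<le> C * \<beta> * ln (\<beta> / \<epsilon>) \<and>
      (\<forall>x \<in> {-1..1}. \<bar>fermi_dirac \<beta> x - poly p x\<bar> \<le> \<epsilon>) \<and>
      (\<forall>x \<in> {-1..1}. \<bar>poly p x\<bar> \<le> 1 + \<epsilon>))"
proof (intro exI[of _ "20 :: real"] conjI allI impI)
  fix \<beta> \<epsilon> :: real assume "\<beta> \<ge> 1" "0 < \<epsilon>" "\<epsilon> < 1"
  have bounded: "\<bar>poly p x\<bar> \<le> 1 + \<epsilon>" if "\<bar>fermi_dirac \<beta> x - poly p x\<bar> \<le> \<epsilon>" for p x
    using that fermi_dirac_pos[of \<beta> x] fermi_dirac_less_1[of \<beta> x] by linarith
  show "\<exists>p :: real poly. real (degree p) \<le> 20 * \<beta> * ln (\<beta> / \<epsilon>) \<and>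
      (\<forall>x \<in> {-1..1}. \<bar>fermi_dirac \<beta> x - poly p x\<bar> \<le> \<epsilon>) \<and>
      (\<forall>x \<in> {-1..1}. \<bar>poly p x\<bar> \<le> 1 + \<epsilon>)"
  proof (cases "\<epsilon> < 1 / 2")
    case True
    then show ?thesis
      using fermi_dirac_poly_approx_small_eps[OF \<open>\<beta> \<ge> 1\<close> \<open>0 < \<epsilon>\<close>] bounded by blast
  next
    case False
    \<comment> \<open>Here \<open>ln (\<beta> / \<epsilon>)\<close> can be arbitrarily close to 0, which forces a constant.\<close>
    then have "\<bar>fermi_dirac \<beta> x - poly [:1 / 2:] x\<bar> \<le> \<epsilon>" for x
      using fermi_dirac_pos[of \<beta> x] fermi_dirac_less_1[of \<beta> x] by (simp add: abs_le_iff)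
    moreover have "0 \<le> ln (\<beta> / \<epsilon>)"
      using \<open>\<beta> \<ge> 1\<close> \<open>0 < \<epsilon>\<close> \<open>\<epsilon> < 1\<close> by (simp add: field_simps)
    ultimately show ?thesis
      using \<open>\<beta> \<ge> 1\<close> \<open>0 < \<epsilon>\<close> bounded by (intro exI[of _ "[:1 / 2:]"]) auto
  qed
qed simp

end
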